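(* Let $P_d$ denote the probability that a $d\times d$ matrix with independent, uniformly distributed entries in $\{0,1\}$ is singular. Then $P_d>\frac{d^2}{2^d}$ for all sufficiently large $d$. *)

theory Defs
  imports Complex_Main "Jordan_Normal_Form.Determinant"
begin

definition zero_one_mats :: "nat \<Rightarrow> real mat set" where
  "zero_one_mats d = {A \<in> carrier_mat d d. \<forall>i<d. \<forall>j<d. A $$ (i, j) \<in> {0, 1}}"

text \<open>P_d: probability that a uniformly random d x d 0/1 matrix (i.e. i.i.d. uniform
  entries) is singular; with the uniform measure on the 2^(d^2) matrices this is the
  proportion of singular ones.\<close>
definition P_sing :: "nat \<Rightarrow> real" where
  "P_sing d = real (card {A \<in> zero_one_mats d. det A = 0}) / real (card (zero_one_mats d))"

end

theory Submission
  imports Defs "HOL-Library.FuncSet" "HOL-Real_Asymp.Real_Asymp"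
begin

text \<open>A 0/1 matrix is singular as soon as two of its rows or two of its columns coincide, or one
  of them vanishes. Counting a vanishing line as a line equal to an extra zero line, there are
  \<open>d (d + 1)\<close> such events. Each one fixes a whole line in terms of the others, so it has
  probability at least \<open>2^-d\<close>; any two of them fix two whole lines up to at most four entries,
  so they occur together with probability at most \<open>16 / 4^d\<close>. The Bonferroni inequality gives
  \<open>P_d \<ge> d (d + 1) / 2^d - 16 (d (d + 1))^2 / 4^d\<close>, and the surplus \<open>d / 2^d\<close> of the main term
  over \<open>d^2 / 2^d\<close> beats the correction term for large \<open>d\<close>.\<close>

definition zero_one_funs :: "'a set \<Rightarrow> ('a \<Rightarrow> 'b::zero_neq_one) set" where
  "zero_one_funs D = {f. (\<forall>p. f p \<in> {0, 1}) \<and> (\<forall>p. p \<notin> D \<longrightarrow> f p = 0)}"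

lemma bij_betw_restrict_zero_one_funs:
  "bij_betw (\<lambda>f. restrict f D) (zero_one_funs D) (D \<rightarrow>\<^sub>E {0, 1})"
proof (rule bij_betw_byWitness[where f' = "\<lambda>h p. if p \<in> D then h p else 0"])
  show "\<forall>f\<in>zero_one_funs D. (\<lambda>p. if p \<in> D then restrict f D p else 0) = f"
    by (auto simp: zero_one_funs_def fun_eq_iff)
  show "\<forall>h\<in>D \<rightarrow>\<^sub>E {0, 1}. restrict (\<lambda>p. if p \<in> D then h p else 0) D = h"
    by (auto simp: fun_eq_iff PiE_def extensional_def)
  show "(\<lambda>f. restrict f D) ` zero_one_funs D \<subseteq> D \<rightarrow>\<^sub>E {0, 1}"
    by (auto simp: zero_one_funs_def)
  show "(\<lambda>h p. if p \<in> D then h p else 0) ` (D \<rightarrow>\<^sub>E {0, 1}) \<subseteq> zero_one_funs D"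
    by (auto simp: zero_one_funs_def PiE_iff)
qed

lemma card_zero_one_funs:
  "finite D \<Longrightarrow> card (zero_one_funs D :: ('a \<Rightarrow> 'b::zero_neq_one) set) = 2 ^ card D"
  using bij_betw_same_card[OF bij_betw_restrict_zero_one_funs[of D]]
  by (simp add: card_PiE numeral_2_eq_2)

lemma finite_zero_one_funs: "finite D \<Longrightarrow> finite (zero_one_funs D)"
  using bij_betw_finite[OF bij_betw_restrict_zero_one_funs[of D]] by (simp add: finite_PiE)

lemma zero_one_funs_values: "f \<in> zero_one_funs D \<Longrightarrow> f p = 0 \<or> f p = 1"
  by (simp add: zero_one_funs_def)

lemma zero_one_funs_outside: "f \<in> zero_one_funs D \<Longrightarrow> p \<notin> D \<Longrightarrow> f p = 0"
  by (simp add: zero_one_funs_def)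

lemma card_zero_one_funs_determined:
  assumes D: "finite D" and E: "E \<subseteq> zero_one_funs D" and T: "T \<subseteq> D"
    and determined: "\<And>p. p \<in> T \<Longrightarrow> \<exists>q. q \<notin> T \<and> (\<forall>f\<in>E. f p = f q)"
  shows "card E * 2 ^ card T \<le> 2 ^ card D"
proof -
  have "inj_on (\<lambda>f. restrict f (D - T)) E"
  proof (rule inj_onI)
    fix f g assume f: "f \<in> E" and g: "g \<in> E" and eq: "restrict f (D - T) = restrict g (D - T)"
    have off_T: "f q = g q" if "q \<notin> T" for q
    proof (cases "q \<in> D")
      case True
      then show ?thesis using eq that by (metis Diff_iff restrict_apply')
    next
      case False
      then show ?thesis using f g E by (metis subsetD zero_one_funs_outside)
    qed
    show "f = g"
    proof
      fix p show "f p = g p"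
        using determined[of p] off_T f g by (cases "p \<in> T") metis+
    qed
  qed
  moreover have "(\<lambda>f. restrict f (D - T)) ` E \<subseteq> (D - T) \<rightarrow>\<^sub>E {0, 1}"
  proof (rule image_subsetI)
    fix f assume "f \<in> E"
    then have "f \<in> zero_one_funs D"
      using E by blast
    then show "restrict f (D - T) \<in> (D - T) \<rightarrow>\<^sub>E {0, 1}"
      by (auto simp: restrict_PiE_iff zero_one_funs_def)
  qed
  ultimately have "card E \<le> card ((D - T) \<rightarrow>\<^sub>E ({0, 1} :: 'b set))"
    using D by (intro card_inj_on_le) (simp_all add: finite_PiE)
  also have "\<dots> = 2 ^ (card D - card T)"
    using D T by (simp add: card_PiE card_Diff_subset finite_subset numeral_2_eq_2)
  finally have "card E \<le> 2 ^ (card D - card T)" .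
  then have "card E * 2 ^ card T \<le> 2 ^ (card D - card T) * 2 ^ card T"
    by simp
  also have "\<dots> = 2 ^ card D"
    using card_mono[OF D T] by (simp flip: power_add)
  finally show ?thesis .
qed

lemma card_zero_one_funs_extendable:
  assumes D: "finite D" and E: "E \<subseteq> zero_one_funs D" and T: "T \<subseteq> D"
    and extendable: "\<And>h. h \<in> (D - T) \<rightarrow>\<^sub>E {0, 1} \<Longrightarrow> \<exists>f\<in>E. \<forall>p\<in>D - T. f p = h p"
  shows "2 ^ card D \<le> card E * 2 ^ card T"
proof -
  have "(D - T) \<rightarrow>\<^sub>E {0, 1} \<subseteq> (\<lambda>f. restrict f (D - T)) ` E"
  proof
    fix h :: "'a \<Rightarrow> 'b" assume h: "h \<in> (D - T) \<rightarrow>\<^sub>E {0, 1}"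
    then obtain f where "f \<in> E" "\<forall>p\<in>D - T. f p = h p"
      using extendable by blast
    moreover have "h = restrict f (D - T)"
      using h calculation(2) by (auto simp: PiE_def extensional_def fun_eq_iff)
    ultimately show "h \<in> (\<lambda>f. restrict f (D - T)) ` E"
      by blast
  qed
  then have "card ((D - T) \<rightarrow>\<^sub>E ({0, 1} :: 'b set)) \<le> card E"
    using finite_subset[OF E finite_zero_one_funs[OF D]]
    by (meson card_image_le card_mono finite_imageI order_trans)
  then have "2 ^ (card D - card T) \<le> card E"
    using D T by (simp add: card_PiE card_Diff_subset finite_subset numeral_2_eq_2)
  then have "2 ^ (card D - card T) * 2 ^ card T \<le> card E * 2 ^ card T"
    by simp
  then show ?thesis
    using card_mono[OF D T] by (simp flip: power_add)
qed

lemma card_UN_ge_Bonferroni: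
  assumes "finite K" and "\<And>k. k \<in> K \<Longrightarrow> finite (E k)"
  shows "(\<Sum>k\<in>K. real (card (E k))) - (\<Sum>k\<in>K. \<Sum>l\<in>K - {k}. real (card (E k \<inter> E l)))
    \<le> real (card (\<Union>k\<in>K. E k))"
  using assms
proof (induction K rule: finite_induct)
  case empty
  then show ?case by simp
next
  case (insert k K)
  let ?V = "\<Union>l\<in>K. E l"
  let ?c = "\<lambda>j l. real (card (E j \<inter> E l))"
  have "card (E k \<inter> ?V) = card (\<Union>l\<in>K. E k \<inter> E l)"
    by (simp only: Int_UN_distrib)
  also have "\<dots> \<le> (\<Sum>l\<in>K. card (E k \<inter> E l))"
    using insert by (intro card_UN_le) auto
  finally have overlap: "real (card (E k \<inter> ?V)) \<le> (\<Sum>l\<in>K. ?c k l)"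
    by (metis of_nat_mono of_nat_sum)
  have "(\<Sum>j\<in>K. \<Sum>l\<in>K - {j}. ?c j l) \<le> (\<Sum>j\<in>K. \<Sum>l\<in>insert k K - {j}. ?c j l)"
    using insert.hyps by (intro sum_mono sum_mono2) auto
  moreover have "(\<Sum>l\<in>insert k K - {k}. ?c k l) = (\<Sum>l\<in>K. ?c k l)"
    using insert.hyps by (simp add: insert_Diff_if)
  moreover have "real (card (E k \<union> ?V)) + real (card (E k \<inter> ?V)) = real (card (E k)) + real (card ?V)"
    using card_Un_Int[of "E k" ?V] insert by (simp flip: of_nat_add)
  moreover have "(\<Sum>j\<in>K. real (card (E j))) - (\<Sum>j\<in>K. \<Sum>l\<in>K - {j}. ?c j l) \<le> real (card ?V)"
    using insert by simp
  ultimately show ?case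
    using insert.hyps overlap by simp
qed

lemma card_UN_ge_uniform_Bonferroni:
  assumes K: "finite K" and fin: "\<And>k. k \<in> K \<Longrightarrow> finite (E k)"
    and single: "\<And>k. k \<in> K \<Longrightarrow> p \<le> real (card (E k))"
    and pair: "\<And>k l. k \<in> K \<Longrightarrow> l \<in> K \<Longrightarrow> k \<noteq> l \<Longrightarrow> real (card (E k \<inter> E l)) \<le> q"
    and q: "0 \<le> q"
  shows "real (card K) * p - real (card K) ^ 2 * q \<le> real (card (\<Union>k\<in>K. E k))"
proof -
  have "real (card K) * p \<le> (\<Sum>k\<in>K. real (card (E k)))"
    using sum_bounded_below[of K p] single by simp
  moreover have "(\<Sum>l\<in>K - {k}. real (card (E k \<inter> E l))) \<le> real (card K) * q" if "k \<in> K" for k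
  proof -
    have "(\<Sum>l\<in>K - {k}. real (card (E k \<inter> E l))) \<le> real (card (K - {k})) * q"
      using that pair by (intro sum_bounded_above) auto
    also have "\<dots> \<le> real (card K) * q"
      using q card_Diff1_le[of K k] by (intro mult_right_mono) auto
    finally show ?thesis .
  qed
  then have "(\<Sum>k\<in>K. \<Sum>l\<in>K - {k}. real (card (E k \<inter> E l))) \<le> real (card K) ^ 2 * q"
    using sum_bounded_above[of K _ "real (card K) * q"] by (simp add: power2_eq_square mult.assoc)
  ultimately show ?thesis
    using card_UN_ge_Bonferroni[of K E, OF K fin] by linarith
qed

abbreviation cells :: "nat \<Rightarrow> (nat \<times> nat) set" where
  "cells d \<equiv> {..<d} \<times> {..<d}"

lemma zero_one_mats_eq_image: "zero_one_mats d = (\<lambda>f. mat d d f) ` zero_one_funs (cells d)"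
proof
  show "(\<lambda>f. mat d d f) ` zero_one_funs (cells d) \<subseteq> zero_one_mats d"
  proof (rule image_subsetI)
    fix f :: "nat \<times> nat \<Rightarrow> real" assume "f \<in> zero_one_funs (cells d)"
    then show "mat d d f \<in> zero_one_mats d"
      unfolding zero_one_mats_def by (simp add: zero_one_funs_values)
  qed
  show "zero_one_mats d \<subseteq> (\<lambda>f. mat d d f) ` zero_one_funs (cells d)"
  proof
    fix A assume A: "A \<in> zero_one_mats d"
    define f where "f = (\<lambda>(i, j). if i < d \<and> j < d then A $$ (i, j) else 0)"
    have "f \<in> zero_one_funs (cells d)"
      using A by (auto simp: zero_one_funs_def zero_one_mats_def f_def)
    moreover have "A = mat d d f"
      using A by (auto simp: zero_one_mats_def f_def)
    ultimately show "A \<in> (\<lambda>f. mat d d f) ` zero_one_funs (cells d)"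
      by blast
  qed
qed

lemma inj_on_mat_zero_one_funs: "inj_on (\<lambda>f. mat d d f) (zero_one_funs (cells d))"
proof (rule inj_onI)
  fix f g :: "nat \<times> nat \<Rightarrow> 'a::zero_neq_one"
  assume f: "f \<in> zero_one_funs (cells d)" and g: "g \<in> zero_one_funs (cells d)"
    and eq: "mat d d f = mat d d g"
  show "f = g"
  proof
    fix p :: "nat \<times> nat"
    show "f p = g p"
    proof (cases "p \<in> cells d")
      case True
      then show ?thesis
        using arg_cong[OF eq, of "\<lambda>A. A $$ p"] by (cases p) simp
    next
      case False
      then show ?thesis
        using f g by (simp add: zero_one_funs_outside)
    qed
  qed
qed

lemma card_zero_one_mats: "card (zero_one_mats d) = 2 ^ (d * d)"
  by (simp add: zero_one_mats_eq_image card_image inj_on_mat_zero_one_funs card_zero_one_funs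
      card_cartesian_product)

lemma det_eq_0_if_zero_row:
  assumes A: "A \<in> carrier_mat n n" and k: "k < n" and zero: "\<And>j. j < n \<Longrightarrow> A $$ (k, j) = 0"
  shows "det A = 0"
proof -
  have "(\<Prod>i = 0..<n. A $$ (i, p i)) = 0" if p: "p permutes {0..<n}" for p
    using k zero permutes_in_image[OF p, of k] by (intro prod_zero bexI[of _ k]) auto
  then show ?thesis
    unfolding det_def'[OF A] by (intro sum.neutral) auto
qed

text \<open>The index \<open>d\<close> refers to a zero row or column just outside the matrix, so that the pair
  \<open>(a, d)\<close> encodes the vanishing of line \<open>a\<close>.\<close>

definition line_pairs :: "nat \<Rightarrow> (nat \<times> nat) set" where
  "line_pairs d = {(a, b). a < b \<and> b \<le> d}"

definition row_event :: "nat \<Rightarrow> nat \<Rightarrow> nat \<Rightarrow> (nat \<times> nat \<Rightarrow> real) set" where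
  "row_event d a b = {f \<in> zero_one_funs (cells d). \<forall>c. f (a, c) = f (b, c)}"

definition col_event :: "nat \<Rightarrow> nat \<Rightarrow> nat \<Rightarrow> (nat \<times> nat \<Rightarrow> real) set" where
  "col_event d a b = {f \<in> zero_one_funs (cells d). \<forall>r. f (r, a) = f (r, b)}"

definition line_event :: "nat \<Rightarrow> (nat \<times> nat) + (nat \<times> nat) \<Rightarrow> (nat \<times> nat \<Rightarrow> real) set" where
  "line_event d = case_sum (case_prod (row_event d)) (case_prod (col_event d))"

lemma finite_line_pairs: "finite (line_pairs d)"
  by (rule finite_subset[of _ "{..d} \<times> {..d}"]) (auto simp: line_pairs_def)

lemma card_line_pairs: "2 * card (line_pairs d) = d * (d + 1)"
proof (induction d)
  case 0
  have "line_pairs 0 = {}"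
    by (auto simp: line_pairs_def)
  then show ?case by simp
next
  case (Suc d)
  have "line_pairs (Suc d) = line_pairs d \<union> (\<lambda>a. (a, Suc d)) ` {..d}"
    by (auto simp: line_pairs_def)
  moreover have "line_pairs d \<inter> (\<lambda>a. (a, Suc d)) ` {..d} = {}"
    by (auto simp: line_pairs_def)
  ultimately have "card (line_pairs (Suc d)) = card (line_pairs d) + Suc d"
    using finite_line_pairs by (simp add: card_Un_disjoint card_image inj_on_def)
  then show ?case
    using Suc by simp
qed

lemma zero_one_funs_comp_swap:
  "f \<in> zero_one_funs D \<Longrightarrow> f \<circ> prod.swap \<in> zero_one_funs (prod.swap ` D)"
  by (auto simp: zero_one_funs_def)

lemma inj_comp_swap: "inj (\<lambda>f. f \<circ> prod.swap)"
  by (rule injI) (metis comp_assoc comp_id swap_comp_swap)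

lemma col_event_eq_image: "col_event d a b = (\<lambda>f. f \<circ> prod.swap) ` row_event d a b"
proof
  show "(\<lambda>f. f \<circ> prod.swap) ` row_event d a b \<subseteq> col_event d a b"
    using zero_one_funs_comp_swap[of _ "cells d"]
    by (auto simp: row_event_def col_event_def product_swap)
  show "col_event d a b \<subseteq> (\<lambda>f. f \<circ> prod.swap) ` row_event d a b"
  proof
    fix f assume f: "f \<in> col_event d a b"
    then have "f \<circ> prod.swap \<in> row_event d a b"
      using zero_one_funs_comp_swap[of f "cells d"]
      by (auto simp: row_event_def col_event_def product_swap)
    moreover have "f = (f \<circ> prod.swap) \<circ> prod.swap"
      by (simp add: comp_assoc)
    ultimately show "f \<in> (\<lambda>f. f \<circ> prod.swap) ` row_event d a b"
      by blast
  qed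
qed

lemma mat_comp_swap: "mat d d (f \<circ> prod.swap) = transpose_mat (mat d d f)"
  by (rule eq_matI) auto

lemma det_eq_0_if_row_event:
  assumes ab: "(a, b) \<in> line_pairs d" and f: "f \<in> row_event d a b"
  shows "det (mat d d f) = 0"
proof (cases "b < d")
  case True
  then have "row (mat d d f) a = row (mat d d f) b"
    using f ab by (auto simp: row_event_def line_pairs_def)
  then show ?thesis
    using det_identical_rows[of "mat d d f" d a b] ab True by (auto simp: line_pairs_def)
next
  case False
  then have "mat d d f $$ (a, j) = 0" if "j < d" for j
    using f ab that zero_one_funs_outside[of f "cells d" "(b, j)"]
    by (auto simp: row_event_def line_pairs_def)
  then show ?thesis
    using ab by (intro det_eq_0_if_zero_row[of _ d a]) (auto simp: line_pairs_def)
qed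

lemma det_eq_0_if_line_event:
  assumes k: "k \<in> line_pairs d <+> line_pairs d" and f: "f \<in> line_event d k"
  shows "det (mat d d f) = 0"
proof (cases k)
  case (Inl ab)
  then show ?thesis
    using k f det_eq_0_if_row_event[of "fst ab" "snd ab"] by (auto simp: line_event_def)
next
  case (Inr ab)
  then obtain g where "g \<in> row_event d (fst ab) (snd ab)" "f = g \<circ> prod.swap"
    using f by (auto simp: line_event_def col_event_eq_image split: prod.splits)
  then show ?thesis
    using k Inr det_eq_0_if_row_event[of "fst ab" "snd ab" d g] det_transpose[of "mat d d g" d]
    by (auto simp: mat_comp_swap)
qed

lemma card_row_event_ge:
  assumes ab: "(a, b) \<in> line_pairs d"
  shows "2 ^ (d * d) \<le> card (row_event d a b) * 2 ^ d"
proof -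
  let ?T = "{a} \<times> {..<d}"
  have "2 ^ card (cells d) \<le> card (row_event d a b) * 2 ^ card ?T"
  proof (rule card_zero_one_funs_extendable)
    show "row_event d a b \<subseteq> zero_one_funs (cells d)"
      by (auto simp: row_event_def)
    show "?T \<subseteq> cells d"
      using ab by (auto simp: line_pairs_def)
    fix h :: "nat \<times> nat \<Rightarrow> real" assume h: "h \<in> (cells d - ?T) \<rightarrow>\<^sub>E {0, 1}"
    define g where "g p = (if p \<in> cells d - ?T then h p else 0)" for p
    define f where "f = (\<lambda>(i, j). g (if i = a then b else i, j))"
    have "f \<in> zero_one_funs (cells d)"
      using h ab by (auto simp: zero_one_funs_def f_def g_def line_pairs_def PiE_iff)
    moreover have "f (a, c) = f (b, c)" for c
      using ab by (simp add: f_def line_pairs_def)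
    moreover have "f (i, j) = h (i, j)" if "(i, j) \<in> cells d - ?T" for i j
      using that by (auto simp: f_def g_def)
    ultimately show "\<exists>f\<in>row_event d a b. \<forall>p\<in>cells d - ?T. f p = h p"
      by (auto simp: row_event_def)
  qed simp
  then show ?thesis
    by (simp add: card_cartesian_product)
qed

lemma two_pair_constraints_fix_two_indices:
  assumes ab: "(a, b) \<in> line_pairs d" and ab': "(a', b') \<in> line_pairs d" and ne: "(a, b) \<noteq> (a', b')"
  obtains t1 t2 s1 s2 where "t1 < d" "t2 < d" "t1 \<noteq> t2" "s1 \<notin> {t1, t2}" "s2 \<notin> {t1, t2}"
    and "\<And>x :: nat \<Rightarrow> 'a. x a = x b \<Longrightarrow> x a' = x b' \<Longrightarrow> x t1 = x s1 \<and> x t2 = x s2"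
proof (cases "a = a'")
  case True
  then show ?thesis
    using ab ab' ne that[of a "min b b'" "max b b'" "max b b'"]
    by (auto simp: line_pairs_def min_def max_def)
next
  case False
  then show ?thesis
    using ab ab' that[of a a' "if b = a' then b' else b" "if b' = a then b else b'"]
    by (auto simp: line_pairs_def)
qed

lemma card_row_event_Int_row_event_le:
  assumes ab: "(a, b) \<in> line_pairs d" and ab': "(a', b') \<in> line_pairs d" and ne: "(a, b) \<noteq> (a', b')"
  shows "card (row_event d a b \<inter> row_event d a' b') * 4 ^ d \<le> 2 ^ (d * d)"
proof -
  obtain t1 t2 s1 s2 where t: "t1 < d" "t2 < d" "t1 \<noteq> t2" "s1 \<notin> {t1, t2}" "s2 \<notin> {t1, t2}"
    and copies: "\<And>x :: nat \<Rightarrow> real. x a = x b \<Longrightarrow> x a' = x b' \<Longrightarrow> x t1 = x s1 \<and> x t2 = x s2"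
    using two_pair_constraints_fix_two_indices[OF ab ab' ne] by blast
  let ?E = "row_event d a b \<inter> row_event d a' b'"
  let ?T = "{t1, t2} \<times> {..<d}"
  have "card ?E * 2 ^ card ?T \<le> 2 ^ card (cells d)"
  proof (rule card_zero_one_funs_determined)
    show "?E \<subseteq> zero_one_funs (cells d)"
      by (auto simp: row_event_def)
    show "?T \<subseteq> cells d"
      using t by auto
    fix p assume "p \<in> ?T"
    then obtain i c where p: "p = (i, c)" "i = t1 \<or> i = t2"
      by auto
    have "f (t1, c) = f (s1, c) \<and> f (t2, c) = f (s2, c)" if "f \<in> ?E" for f
      using copies[of "\<lambda>r. f (r, c)"] that by (auto simp: row_event_def)
    then show "\<exists>q. q \<notin> ?T \<and> (\<forall>f\<in>?E. f p = f q)"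
      using p t by (intro exI[of _ "(if i = t1 then s1 else s2, c)"]) auto
  qed simp
  moreover have "card ?T = 2 * d"
    using t by (simp add: card_cartesian_product)
  ultimately show ?thesis
    by (simp add: power_mult)
qed

lemma card_row_event_Int_col_event_le:
  assumes ab: "(a, b) \<in> line_pairs d" and kl: "(k, l) \<in> line_pairs d"
  shows "card (row_event d a b \<inter> col_event d k l) * 4 ^ d \<le> 16 * 2 ^ (d * d)"
proof -
  have lines: "a < d" "a \<noteq> b" "k < d" "k \<noteq> l"
    using ab kl by (auto simp: line_pairs_def)
  let ?E = "row_event d a b \<inter> col_event d k l"
  \<comment> \<open>Row \<open>a\<close> copies row \<open>b\<close> off columns \<open>k, l\<close>;
    column \<open>k\<close> copies column \<open>l\<close> off rows \<open>a, b\<close>.\<close>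
  let ?A = "{a} \<times> ({..<d} - {k, l})"
  let ?B = "({..<d} - {a, b}) \<times> {k}"
  have determined: "card ?E * 2 ^ card (?A \<union> ?B) \<le> 2 ^ card (cells d)"
  proof (rule card_zero_one_funs_determined)
    show "?E \<subseteq> zero_one_funs (cells d)"
      by (auto simp: row_event_def)
    show "?A \<union> ?B \<subseteq> cells d"
      using lines by auto
    fix p assume p: "p \<in> ?A \<union> ?B"
    show "\<exists>q. q \<notin> ?A \<union> ?B \<and> (\<forall>f\<in>?E. f p = f q)"
    proof (cases "p \<in> ?A")
      case True
      then obtain c where "p = (a, c)" "c \<noteq> k"
        by auto
      then show ?thesis
        using lines by (intro exI[of _ "(b, c)"]) (auto simp: row_event_def)
    next
      case False
      then obtain r where "p = (r, k)" "r \<noteq> a"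
        using p by auto
      then show ?thesis
        using lines by (intro exI[of _ "(r, l)"]) (auto simp: col_event_def)
    qed
  qed simp
  have "2 * d \<le> card (?A \<union> ?B) + 4"
  proof -
    have large: "d \<le> card ({..<d} - {x, y}) + 2" for x y :: nat
    proof -
      have "card {x, y} \<le> 2"
        by (simp add: card_insert_if)
      then show ?thesis
        using diff_card_le_card_Diff[of "{x, y}" "{..<d}"] by simp
    qed
    have "card (?A \<union> ?B) = card ({..<d} - {k, l}) + card ({..<d} - {a, b})"
      by (subst card_Un_disjoint) (auto simp: card_cartesian_product)
    then show ?thesis
      using large[of k l] large[of a b] by linarith
  qed
  then have "(2::nat) ^ (2 * d) \<le> 2 ^ (card (?A \<union> ?B) + 4)"
    by (rule power_increasing) simp
  then have "card ?E * 4 ^ d \<le> card ?E * (16 * 2 ^ card (?A \<union> ?B))"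
    by (simp add: power_mult power_add)
  also have "\<dots> \<le> 16 * 2 ^ (d * d)"
    using determined by (simp add: card_cartesian_product)
  finally show ?thesis .
qed

lemma card_col_event_Int_col_event:
  "card (col_event d a b \<inter> col_event d a' b') = card (row_event d a b \<inter> row_event d a' b')"
  using card_image[OF inj_on_subset[OF inj_comp_swap]]
  by (simp add: col_event_eq_image image_Int[OF inj_comp_swap, symmetric])

lemma card_line_event_ge:
  assumes "k \<in> line_pairs d <+> line_pairs d"
  shows "2 ^ (d * d) / 2 ^ d \<le> real (card (line_event d k))"
proof -
  have "2 ^ (d * d) \<le> card (line_event d k) * 2 ^ d"
    using assms card_row_event_ge
      card_image[OF inj_on_subset[OF inj_comp_swap, of "row_event d _ _"]]
    by (auto simp: line_event_def col_event_eq_image)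
  then have "real (2 ^ (d * d)) \<le> real (card (line_event d k) * 2 ^ d)"
    by (rule of_nat_mono)
  then show ?thesis
    by (simp add: divide_le_eq)
qed

lemma card_line_event_Int_le:
  assumes k: "k \<in> line_pairs d <+> line_pairs d" and l: "l \<in> line_pairs d <+> line_pairs d"
    and "k \<noteq> l"
  shows "real (card (line_event d k \<inter> line_event d l)) \<le> 16 * 2 ^ (d * d) / 4 ^ d"
proof -
  have row_row: "card (row_event d a b \<inter> row_event d a' b') * 4 ^ d \<le> 16 * 2 ^ (d * d)"
    if "(a, b) \<in> line_pairs d" "(a', b') \<in> line_pairs d" "(a, b) \<noteq> (a', b')" for a b a' b'
    using card_row_event_Int_row_event_le[OF that] by linarith
  have "card (line_event d k \<inter> line_event d l) * 4 ^ d \<le> 16 * 2 ^ (d * d)"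
  proof (cases k; cases l)
    fix ab ab' assume "k = Inl ab" "l = Inl ab'"
    then show ?thesis
      using k l \<open>k \<noteq> l\<close> row_row[of "fst ab" "snd ab" "fst ab'" "snd ab'"]
      by (auto simp: line_event_def case_prod_beta prod_eq_iff)
  next
    fix ab ab' assume "k = Inl ab" "l = Inr ab'"
    then show ?thesis
      using k l card_row_event_Int_col_event_le[of "fst ab" "snd ab" d "fst ab'" "snd ab'"]
      by (auto simp: line_event_def case_prod_beta)
  next
    fix ab ab' assume "k = Inr ab" "l = Inl ab'"
    then show ?thesis
      using k l card_row_event_Int_col_event_le[of "fst ab'" "snd ab'" d "fst ab" "snd ab"]
      by (auto simp: line_event_def case_prod_beta Int_commute)
  next
    fix ab ab' assume "k = Inr ab" "l = Inr ab'"
    then show ?thesis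
      using k l \<open>k \<noteq> l\<close> row_row[of "fst ab" "snd ab" "fst ab'" "snd ab'"]
      by (auto simp: line_event_def case_prod_beta prod_eq_iff card_col_event_Int_col_event)
  qed
  then have "real (card (line_event d k \<inter> line_event d l) * 4 ^ d) \<le> real (16 * 2 ^ (d * d))"
    by (rule of_nat_mono)
  then show ?thesis
    by (simp add: le_divide_eq)
qed

lemma line_event_subset: "line_event d k \<subseteq> zero_one_funs (cells d)"
  by (auto simp: line_event_def row_event_def col_event_def split: sum.splits)

lemma card_UN_line_events_le:
  "card (\<Union>k\<in>line_pairs d <+> line_pairs d. line_event d k) \<le> card {A \<in> zero_one_mats d. det A = 0}"
proof -
  let ?V = "\<Union>k\<in>line_pairs d <+> line_pairs d. line_event d k"
  have V: "?V \<subseteq> zero_one_funs (cells d)"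
    using line_event_subset by blast
  have "(\<lambda>f. mat d d f) ` ?V \<subseteq> {A \<in> zero_one_mats d. det A = 0}"
  proof (rule image_subsetI)
    fix f assume f: "f \<in> ?V"
    then have "mat d d f \<in> zero_one_mats d"
      using V by (auto simp: zero_one_mats_eq_image)
    moreover have "det (mat d d f) = 0"
      using f det_eq_0_if_line_event by blast
    ultimately show "mat d d f \<in> {A \<in> zero_one_mats d. det A = 0}"
      by simp
  qed
  moreover have "finite {A \<in> zero_one_mats d. det A = 0}"
    by (simp add: zero_one_mats_eq_image finite_zero_one_funs)
  ultimately have "card ((\<lambda>f. mat d d f) ` ?V) \<le> card {A \<in> zero_one_mats d. det A = 0}"
    by (rule card_mono[rotated])
  then show ?thesis
    using card_image[OF inj_on_subset[OF inj_on_mat_zero_one_funs V]] by simp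
qed

lemma P_sing_ge:
  "real (d * (d + 1)) / 2 ^ d - 16 * real (d * (d + 1)) ^ 2 / 4 ^ d \<le> P_sing d"
proof -
  let ?K = "line_pairs d <+> line_pairs d"
  let ?N = "real (d * (d + 1))"
  have card_K: "real (card ?K) = ?N"
    using card_line_pairs[of d] by (simp add: card_Plus finite_line_pairs flip: mult_2 of_nat_mult)
  have "real (card ?K) * (2 ^ (d * d) / 2 ^ d) - real (card ?K) ^ 2 * (16 * 2 ^ (d * d) / 4 ^ d)
      \<le> real (card (\<Union>k\<in>?K. line_event d k))"
    using finite_line_pairs finite_subset[OF line_event_subset finite_zero_one_funs]
      card_line_event_ge card_line_event_Int_le
    by (intro card_UN_ge_uniform_Bonferroni) auto
  also have "\<dots> \<le> 2 ^ (d * d) * P_sing d"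
    using card_UN_line_events_le by (simp add: P_sing_def card_zero_one_mats)
  finally have "2 ^ (d * d) * (?N / 2 ^ d - 16 * ?N ^ 2 / 4 ^ d) \<le> 2 ^ (d * d) * P_sing d"
    by (simp add: card_K algebra_simps)
  then show ?thesis
    by simp
qed

theorem mainTheorem8:
  shows "\<forall>\<^sub>F d in sequentially. P_sing d > real d ^ 2 / 2 ^ d"
proof -
  have "\<forall>\<^sub>F d in sequentially.
      real d ^ 2 / 2 ^ d < real (d * (d + 1)) / 2 ^ d - 16 * real (d * (d + 1)) ^ 2 / 4 ^ d"
    by real_asymp
  then show ?thesis
    by (rule eventually_mono) (use P_sing_ge in \<open>blast intro: order.strict_trans2\<close>)
qed

end
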